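(* Let $X\subseteq U$ be a fixed set of $|X|=m$ keys, and let $S\subseteq[2^r]$ with $|S|/2^r=\rho$. Let $h:U\to[2^r]$ be a simple tabulation hash function, and define $p_0'=1-(1-\rho)^m$. If $p$ denotes the probability that $h(X)\cap S\neq\emptyset$, then $$|p-p_0'|\le m^{2-1/c}\rho^2.$$ Moreover, if $q\in U\setminus X$ is a distinguished query key and $S$ (and hence $\rho$) is allowed to depend on $h(q)$, i.e. for every $z\in[2^r]$, conditioned on $h(q)=z$ the set $S$ is a fixed function of $z$ and $p$ denotes the conditional probability that $h(X)\cap S\ne\emptyset$, then $|p-p_0'|\le 2m^{2-1/c}\rho^2$.
   Context: Simple tabulation hashing: the key universe is $U=[u]$, each key $x\in U$ is viewed as a vector $(x[0],\dots,x[c-1])$ of $c=O(1)$ characters from $\Sigma=[u^{1/c}]$; the range is $[2^r]$, viewed as $r$-bit strings. $h(x)=h_0(x[0])\oplus\cdots\oplus h_{c-1}(x[c-1])$ with $h_0,\dots,h_{c-1}:\Sigma\to[2^r]$ independent fully random functions and $\oplus$ bitwise XOR. *)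

theory Defs
  imports "HOL-Probability.Probability"
begin

text \<open>Keys of U = [sigma^c] are represented as
  character vectors (lists of length c over the alphabet [sigma]); hash values
  lie in [2^r], viewed as r-bit strings, combined by bitwise XOR on nat.\<close>

definition keys :: "nat \<Rightarrow> nat \<Rightarrow> nat list set" where
  "keys c \<sigma> = {x. length x = c \<and> set x \<subseteq> {..<\<sigma>}}"

text \<open>A table assignment T (i, a) = h_i(a) for character position i < c and
  character a < sigma; all such assignments (fully random, independent).\<close>
definition tables :: "nat \<Rightarrow> nat \<Rightarrow> nat \<Rightarrow> (nat \<times> nat \<Rightarrow> nat) set" where
  "tables c \<sigma> r = PiE ({..<c} \<times> {..<\<sigma>}) (\<lambda>_. {..<2^r})"

definition tab_hash :: "nat \<Rightarrow> (nat \<times> nat \<Rightarrow> nat) \<Rightarrow> nat list \<Rightarrow> nat" where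
  "tab_hash c T x = foldr (\<lambda>i acc. xor (T (i, x ! i)) acc) [0..<c] 0"

text \<open>Uniform distribution on the tables = independent fully random h_0..h_{c-1}.\<close>
definition tab_dist :: "nat \<Rightarrow> nat \<Rightarrow> nat \<Rightarrow> (nat \<times> nat \<Rightarrow> nat) pmf" where
  "tab_dist c \<sigma> r = pmf_of_set (tables c \<sigma> r)"

end

theory Submission
  imports Defs
begin

text \<open>Enumerate X and add the events h(x) \<in> S one at a time: the probability of the union
  deviates from 1 - (1 - \<rho>)^m by at most the sum over x of the deviation of
  P(h(x) \<in> S, some earlier key hits S) from \<rho> P(some earlier key hits S).
  Fix a character position k of x. The table entry h_k(x[k]) is uniform and independent of
  the rest of the table, so the earlier keys whose k-th character differs from x[k] give an
  event exactly independent of h(x) \<in> S, and the others are handled by a union bound with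
  pairwise probabilities \<rho>^2. Hence the error charged to x is at most \<rho>^2 min_k n_k(x),
  where n_k(x) counts the keys of X sharing the k-th character with x. Now
  (min_k n_k(x))^c \<le> \<Prod>_k n_k(x), and \<Sum>_x \<Prod>_k n_k(x) \<le> m^c because x is determined by
  any tuple of keys y_0, ..., y_{c-1} with y_k[k] = x[k]; the power mean inequality gives
  \<Sum>_x min_k n_k(x) \<le> m^(2 - 1/c).

  Given h(q) = z, the entries h_k(x[k]) with x[k] \<noteq> q[k] are still uniform and independent.
  Using only those positions, and bounding n_k(x) by m where x[k] = q[k], the counting loses
  a factor 2^c (the set of positions where x agrees with q), i.e. a factor 2 after taking
  c-th roots.\<close>

lemma xor_less_exp:
  fixes a b :: nat
  assumes "a < 2 ^ r" "b < 2 ^ r"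
  shows "xor a b < 2 ^ r"
proof -
  have "take_bit r (xor a b) = xor a b"
    using assms by (simp add: take_bit_nat_eq_self)
  then show ?thesis
    by (metis take_bit_nat_less_exp)
qed

lemma card_xor_preimage:
  fixes S :: "nat set"
  assumes "S \<subseteq> {..<2 ^ r}" "w < 2 ^ r"
  shows "card {t \<in> {..<2 ^ r}. xor t w \<in> S} = card S"
proof -
  have "{t \<in> {..<2 ^ r}. xor t w \<in> S} = (\<lambda>s. xor s w) ` S"
    using assms by (force simp: xor.assoc intro: xor_less_exp)
  moreover have "inj_on (\<lambda>s. xor s w) S"
    by (rule inj_onI) (metis xor.assoc xor.comm_neutral xor_self_eq)
  ultimately show ?thesis
    by (simp add: card_image)
qed

lemma finite_keys: "finite (keys c \<sigma>)"
proof -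
  have "keys c \<sigma> = {x. set x \<subseteq> {..<\<sigma>} \<and> length x = c}"
    unfolding keys_def by auto
  then show ?thesis
    using finite_lists_length_eq[of "{..<\<sigma>}" c] by simp
qed

lemma nth_key_less: "x \<in> keys c \<sigma> \<Longrightarrow> k < c \<Longrightarrow> x ! k < \<sigma>"
  unfolding keys_def by (auto dest: nth_mem)

lemma keys_neq_imp_nth_neq:
  assumes "x \<in> keys c \<sigma>" "y \<in> keys c \<sigma>" "x \<noteq> y"
  obtains k where "k < c" "x ! k \<noteq> y ! k"
proof -
  have "length x = c" "length y = c"
    using assms unfolding keys_def by auto
  have "\<exists>k<c. x ! k \<noteq> y ! k"
  proof (rule ccontr)
    assume "\<not> ?thesis"
    with \<open>length x = c\<close> \<open>length y = c\<close> have "x = y"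
      by (intro nth_equalityI) auto
    with assms(3) show False ..
  qed
  with that show ?thesis
    by blast
qed

lemma finite_tables: "finite (tables c \<sigma> r)"
  unfolding tables_def by (intro finite_PiE) auto

lemma tables_nonempty: "tables c \<sigma> r \<noteq> {}"
  unfolding tables_def by (auto simp: PiE_eq_empty_iff lessThan_empty_iff)

lemma table_entry_less: "T \<in> tables c \<sigma> r \<Longrightarrow> k < c \<Longrightarrow> a < \<sigma> \<Longrightarrow> T (k, a) < 2 ^ r"
  unfolding tables_def by (auto dest: PiE_mem)

lemma fun_upd_in_tables:
  assumes "T \<in> tables c \<sigma> r" "k < c" "a < \<sigma>" "t < 2 ^ r"
  shows "T((k, a) := t) \<in> tables c \<sigma> r"
proof -
  have "T((k, a) := t) \<in> PiE (insert (k, a) ({..<c} \<times> {..<\<sigma>})) (\<lambda>_. {..<2 ^ r})"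
    using assms unfolding tables_def by (intro PiE_fun_upd) auto
  then show ?thesis
    using assms unfolding tables_def by (simp add: insert_absorb)
qed

lemma tab_hash_less:
  assumes "T \<in> tables c \<sigma> r" "x \<in> keys c \<sigma>"
  shows "tab_hash c T x < 2 ^ r"
proof -
  have "foldr (\<lambda>i. xor (T (i, x ! i))) is 0 < 2 ^ r" if "set is \<subseteq> {..<c}" for "is"
    using that assms
    by (induction "is") (auto intro!: xor_less_exp table_entry_less nth_key_less)
  from this[of "[0..<c]"] show ?thesis
    unfolding tab_hash_def by (simp add: atLeast0LessThan)
qed

lemma tab_hash_cong:
  "(\<And>i. i < c \<Longrightarrow> T (i, x ! i) = T' (i, x ! i)) \<Longrightarrow> tab_hash c T x = tab_hash c T' x"
  unfolding tab_hash_def by (rule foldr_cong) auto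

lemma tab_hash_fun_upd_other:
  "k < c \<Longrightarrow> x ! k \<noteq> a \<Longrightarrow> tab_hash c (T((k, a) := t)) x = tab_hash c T x"
  by (rule tab_hash_cong) auto

lemma tab_hash_fun_upd:
  assumes "k < c"
  shows "tab_hash c (T((k, x ! k) := t)) x = xor (xor t (T (k, x ! k))) (tab_hash c T x)"
proof -
  have "foldr (\<lambda>i. xor ((T((k, x ! k) := t)) (i, x ! i))) is 0
      = xor (xor t (T (k, x ! k))) (foldr (\<lambda>i. xor (T (i, x ! i))) is 0)"
    if "distinct is" "k \<in> set is" for "is"
    using that
  proof (induction "is")
    case (Cons i "is")
    show ?case
    proof (cases "i = k")
      case True
      with Cons.prems have "foldr (\<lambda>i. xor ((T((k, x ! k) := t)) (i, x ! i))) is 0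
          = foldr (\<lambda>i. xor (T (i, x ! i))) is 0"
        by (intro foldr_cong) auto
      moreover have "xor (xor t (T (k, x ! k))) (T (k, x ! k)) = t"
        by (simp add: xor.assoc)
      ultimately show ?thesis
        using True by (simp flip: xor.assoc)
    next
      case False
      with Cons show ?thesis
        by (simp add: xor.left_commute)
    qed
  qed simp
  then show ?thesis
    unfolding tab_hash_def using assms by simp
qed

section \<open>Independence of a free table entry\<close>

lemma card_fun_upd_fibres:
  fixes A :: "('a \<Rightarrow> 'b) set"
  assumes "finite A"
    and range: "\<And>T. T \<in> A \<Longrightarrow> T e \<in> V"
    and closed: "\<And>T t. T \<in> A \<Longrightarrow> t \<in> V \<Longrightarrow> T(e := t) \<in> A"
  shows "card {T \<in> A. P T} = (\<Sum>T0 \<in> (\<lambda>T. T(e := d)) ` A. card {t \<in> V. P (T0(e := t))})"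
proof -
  let ?fibre = "\<lambda>T0. {T \<in> A. T(e := d) = T0 \<and> P T}"
  have "card {T \<in> A. P T} = card (\<Union>T0 \<in> (\<lambda>T. T(e := d)) ` A. ?fibre T0)"
    by (rule arg_cong[where f = card]) auto
  also have "\<dots> = (\<Sum>T0 \<in> (\<lambda>T. T(e := d)) ` A. card (?fibre T0))"
    using \<open>finite A\<close> by (intro card_UN_disjoint) auto
  also have "\<dots> = (\<Sum>T0 \<in> (\<lambda>T. T(e := d)) ` A. card {t \<in> V. P (T0(e := t))})"
  proof (rule sum.cong)
    fix T0 assume "T0 \<in> (\<lambda>T. T(e := d)) ` A"
    then obtain T1 where T1: "T1 \<in> A" "T0 = T1(e := d)"
      by blast
    have "?fibre T0 = (\<lambda>t. T0(e := t)) ` {t \<in> V. P (T0(e := t))}"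
    proof (intro equalityI subsetI)
      fix T assume "T \<in> ?fibre T0"
      then show "T \<in> (\<lambda>t. T0(e := t)) ` {t \<in> V. P (T0(e := t))}"
        using range by (auto intro!: image_eqI[of _ _ "T e"])
    next
      fix T assume "T \<in> (\<lambda>t. T0(e := t)) ` {t \<in> V. P (T0(e := t))}"
      then show "T \<in> ?fibre T0"
        using T1 closed[OF T1(1)] by auto
    qed
    moreover have "inj_on (\<lambda>t. T0(e := t)) {t \<in> V. P (T0(e := t))}"
      by (rule inj_onI) (metis fun_upd_same)
    ultimately show "card (?fibre T0) = card {t \<in> V. P (T0(e := t))}"
      by (simp add: card_image)
  qed simp
  finally show ?thesis .
qed

lemma card_Int_fun_upd_invariant:
  fixes A :: "('a \<Rightarrow> 'b) set"
  assumes "finite A" "d \<in> V"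
    and range: "\<And>T. T \<in> A \<Longrightarrow> T e \<in> V"
    and closed: "\<And>T t. T \<in> A \<Longrightarrow> t \<in> V \<Longrightarrow> T(e := t) \<in> A"
    and F_inv: "\<And>T t. T \<in> A \<Longrightarrow> t \<in> V \<Longrightarrow> T(e := t) \<in> F \<longleftrightarrow> T \<in> F"
    and G_count: "\<And>T. T \<in> A \<Longrightarrow> card {t \<in> V. T(e := t) \<in> G} = n"
  shows "card (A \<inter> G \<inter> F) = n * card ((\<lambda>T. T(e := d)) ` A \<inter> F)"
proof -
  let ?A0 = "(\<lambda>T. T(e := d)) ` A"
  have "card (A \<inter> G \<inter> F) = card {T \<in> A. T \<in> G \<inter> F}"
    by (rule arg_cong[where f = card]) auto
  also have "\<dots> = (\<Sum>T0 \<in> ?A0. card {t \<in> V. T0(e := t) \<in> G \<inter> F})"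
    using \<open>finite A\<close> range closed by (rule card_fun_upd_fibres)
  also have "\<dots> = (\<Sum>T0 \<in> ?A0. if T0 \<in> F then n else 0)"
  proof (rule sum.cong)
    fix T0 assume "T0 \<in> ?A0"
    then have "T0 \<in> A"
      using closed \<open>d \<in> V\<close> by auto
    then have "{t \<in> V. T0(e := t) \<in> G \<inter> F} = (if T0 \<in> F then {t \<in> V. T0(e := t) \<in> G} else {})"
      using F_inv by auto
    then show "card {t \<in> V. T0(e := t) \<in> G \<inter> F} = (if T0 \<in> F then n else 0)"
      using G_count[OF \<open>T0 \<in> A\<close>] by simp
  qed simp
  also have "\<dots> = n * card (?A0 \<inter> F)"
    using \<open>finite A\<close> by (simp add: sum.If_cases)
  finally show ?thesis .
qed

lemma prob_tab_hash_in_Int_free_entry: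
  assumes A: "A \<subseteq> tables c \<sigma> r" "finite A" "A \<noteq> {}"
    and x: "x \<in> keys c \<sigma>" and k: "k < c" and S: "S \<subseteq> {..<2 ^ r}"
    and free: "\<And>T t. T \<in> A \<Longrightarrow> t < 2 ^ r \<Longrightarrow> T((k, x ! k) := t) \<in> A"
    and F_inv: "\<And>T t. T \<in> A \<Longrightarrow> t < 2 ^ r \<Longrightarrow> T((k, x ! k) := t) \<in> F \<longleftrightarrow> T \<in> F"
  shows "measure_pmf.prob (pmf_of_set A) ({T. tab_hash c T x \<in> S} \<inter> F)
       = card S / 2 ^ r * measure_pmf.prob (pmf_of_set A) F"
proof -
  define e where "e = (k, x ! k)"
  let ?A0 = "(\<lambda>T. T(e := 0)) ` A"
  have range: "T e \<in> {..<2 ^ r}" if "T \<in> A" for T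
    using that A(1) k x unfolding e_def by (auto intro: table_entry_less nth_key_less)
  have hits_count: "card {t \<in> {..<2 ^ r}. T(e := t) \<in> {T. tab_hash c T x \<in> S}} = card S"
    if "T \<in> A" for T
  proof -
    have "tab_hash c (T(e := t)) x = xor t (xor (T e) (tab_hash c T x))" for t
      using tab_hash_fun_upd[OF k] unfolding e_def by (simp add: xor.assoc)
    moreover have "xor (T e) (tab_hash c T x) < 2 ^ r"
      using range that A(1) x by (auto intro: xor_less_exp tab_hash_less)
    ultimately show ?thesis
      using card_xor_preimage[OF S] by simp
  qed
  have "card (A \<inter> {T. tab_hash c T x \<in> S} \<inter> F) = card S * card (?A0 \<inter> F)"
    by (rule card_Int_fun_upd_invariant[where V = "{..<2 ^ r}", OF A(2)]) (use range free F_inv hits_count in \<open>auto simp: e_def\<close>)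
  moreover have "card (A \<inter> UNIV \<inter> F) = 2 ^ r * card (?A0 \<inter> F)"
    by (rule card_Int_fun_upd_invariant[where V = "{..<2 ^ r}", OF A(2)]) (use range free F_inv in \<open>auto simp: e_def\<close>)
  ultimately show ?thesis
    using A by (simp add: measure_pmf_of_set Int_assoc)
qed

section \<open>Deviation of the probability of a union\<close>

lemma (in prob_space) prob_Int_union_deviation:
  fixes \<rho> :: real
  assumes events: "E \<in> events" "F \<in> events" "\<And>j. j \<in> J \<Longrightarrow> G j \<in> events"
    and "finite J" "0 \<le> \<rho>"
    and indep_F: "prob (E \<inter> F) = \<rho> * prob F"
    and prob_G: "\<And>j. j \<in> J \<Longrightarrow> prob (G j) = \<rho>"
    and pair_G: "\<And>j. j \<in> J \<Longrightarrow> prob (E \<inter> G j) = \<rho>\<^sup>2"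
  shows "\<bar>prob (E \<inter> (F \<union> (\<Union>j\<in>J. G j))) - \<rho> * prob (F \<union> (\<Union>j\<in>J. G j))\<bar> \<le> card J * \<rho>\<^sup>2"
proof -
  let ?G = "\<Union>j\<in>J. G j"
  have G: "?G \<in> events"
    using events \<open>finite J\<close> by auto
  have "prob (E \<inter> (F \<union> ?G)) = prob (E \<inter> F) + prob (E \<inter> (?G - F))"
    using events G by (subst finite_measure_Union[symmetric]) (auto intro!: arg_cong[where f = prob])
  moreover have "prob (F \<union> ?G) = prob F + prob (?G - F)"
    using events G by (intro finite_measure_Union') auto
  ultimately have diff: "prob (E \<inter> (F \<union> ?G)) - \<rho> * prob (F \<union> ?G)
      = prob (E \<inter> (?G - F)) - \<rho> * prob (?G - F)"
    using indep_F by (simp add: algebra_simps)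
  have "prob (E \<inter> (?G - F)) \<le> prob (\<Union>j\<in>J. E \<inter> G j)"
    using events \<open>finite J\<close> by (intro finite_measure_mono) auto
  also have "\<dots> \<le> (\<Sum>j\<in>J. prob (E \<inter> G j))"
    using events \<open>finite J\<close> by (intro finite_measure_subadditive_finite) auto
  finally have upper: "prob (E \<inter> (?G - F)) \<le> card J * \<rho>\<^sup>2"
    using pair_G by simp
  have "prob (?G - F) \<le> prob ?G"
    using events G by (intro finite_measure_mono) auto
  also have "\<dots> \<le> (\<Sum>j\<in>J. prob (G j))"
    using events \<open>finite J\<close> by (intro finite_measure_subadditive_finite) auto
  finally have "prob (?G - F) \<le> card J * \<rho>"
    using prob_G by simp
  then have "\<rho> * prob (?G - F) \<le> \<rho> * (card J * \<rho>)"
    using \<open>0 \<le> \<rho>\<close> by (rule mult_left_mono)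
  then have lower: "\<rho> * prob (?G - F) \<le> card J * \<rho>\<^sup>2"
    by (simp add: power2_eq_square mult.left_commute)
  have "0 \<le> prob (E \<inter> (?G - F))" "0 \<le> \<rho> * prob (?G - F)"
    using \<open>0 \<le> \<rho>\<close> by auto
  with diff upper lower show ?thesis
    by linarith
qed

lemma (in prob_space) prob_UN_deviation:
  fixes \<rho> :: real
  assumes "finite I" "0 \<le> \<rho>" "\<rho> \<le> 1"
    and events: "\<And>i. i \<in> I \<Longrightarrow> E i \<in> events"
    and prob_E: "\<And>i. i \<in> I \<Longrightarrow> prob (E i) = \<rho>"
    and step: "\<And>i J. i \<in> I \<Longrightarrow> J \<subseteq> I - {i} \<Longrightarrow>
      \<bar>prob (E i \<inter> (\<Union>j\<in>J. E j)) - \<rho> * prob (\<Union>j\<in>J. E j)\<bar> \<le> b i"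
  shows "\<bar>prob (\<Union>i\<in>I. E i) - (1 - (1 - \<rho>) ^ card I)\<bar> \<le> (\<Sum>i\<in>I. b i)"
  using \<open>finite I\<close> events prob_E step
proof (induction I rule: finite_induct)
  case (insert i I)
  let ?U = "\<Union>j\<in>I. E j"
  let ?dev = "prob ?U - (1 - (1 - \<rho>) ^ card I)"
  let ?err = "prob (E i \<inter> ?U) - \<rho> * prob ?U"
  have U: "?U \<in> events"
    using insert by auto
  have "prob (\<Union>j\<in>insert i I. E j) = prob (?U \<union> E i)"
    by (simp add: Un_commute)
  also have "\<dots> = prob ?U + prob (E i - ?U)"
    using insert U by (intro finite_measure_Union') auto
  also have "prob (E i - ?U) = \<rho> - prob (E i \<inter> ?U)"
    using insert U by (simp add: finite_measure_Diff')
  finally have "prob (\<Union>j\<in>insert i I. E j) - (1 - (1 - \<rho>) ^ card (insert i I))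
      = (1 - \<rho>) * ?dev - ?err"
    using insert by (simp add: algebra_simps)
  then have "\<bar>prob (\<Union>j\<in>insert i I. E j) - (1 - (1 - \<rho>) ^ card (insert i I))\<bar>
      \<le> \<bar>(1 - \<rho>) * ?dev\<bar> + \<bar>?err\<bar>"
    by (simp add: abs_triangle_ineq4)
  also have "\<dots> \<le> (\<Sum>j\<in>I. b j) + b i"
  proof (rule add_mono)
    have "\<bar>(1 - \<rho>) * ?dev\<bar> \<le> \<bar>?dev\<bar>"
      using \<open>0 \<le> \<rho>\<close> \<open>\<rho> \<le> 1\<close> by (simp add: abs_mult mult_left_le_one_le)
    also have "\<dots> \<le> (\<Sum>j\<in>I. b j)"
      by (intro insert.IH insert.prems) auto
    finally show "\<bar>(1 - \<rho>) * ?dev\<bar> \<le> (\<Sum>j\<in>I. b j)" .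
    show "\<bar>?err\<bar> \<le> b i"
      using insert by (intro insert.prems(3)) auto
  qed
  finally show ?case
    using insert by (simp add: add.commute)
qed simp

section \<open>Keys hitting a set under tables with free entries\<close>

definition agreeing :: "nat list set \<Rightarrow> nat \<Rightarrow> nat list \<Rightarrow> nat list set" where
  "agreeing X k x = {y \<in> X. y ! k = x ! k}"

text \<open>Closure of A under reassigning the entry (k, x ! k) makes that entry uniform and
  independent of all other entries under the uniform distribution on A; such entries are
  called free.\<close>

locale free_entries =
  fixes c \<sigma> r :: nat and A :: "(nat \<times> nat \<Rightarrow> nat) set"
    and X :: "nat list set" and free :: "nat list \<Rightarrow> nat \<Rightarrow> bool"
  assumes A_tables: "A \<subseteq> tables c \<sigma> r" and finite_A: "finite A" and A_nonempty: "A \<noteq> {}"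
    and X_keys: "X \<subseteq> keys c \<sigma>"
    and free_upd: "\<And>x k T t. x \<in> X \<Longrightarrow> k < c \<Longrightarrow> free x k \<Longrightarrow> T \<in> A \<Longrightarrow> t < 2 ^ r \<Longrightarrow>
      T((k, x ! k) := t) \<in> A"
    and ex_free: "\<And>x. x \<in> X \<Longrightarrow> \<exists>k<c. free x k"
    and free_separates: "\<And>x y. x \<in> X \<Longrightarrow> y \<in> X \<Longrightarrow> x \<noteq> y \<Longrightarrow>
      \<exists>k<c. x ! k \<noteq> y ! k \<and> (free x k \<or> free y k)"
begin

abbreviation Pr :: "(nat \<times> nat \<Rightarrow> nat) set \<Rightarrow> real" where
  "Pr \<equiv> measure_pmf.prob (pmf_of_set A)"

abbreviation hits :: "nat set \<Rightarrow> nat list \<Rightarrow> (nat \<times> nat \<Rightarrow> nat) set" where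
  "hits S x \<equiv> {T. tab_hash c T x \<in> S}"

lemma finite_X: "finite X"
  using X_keys finite_keys by (rule finite_subset)

lemma prob_hits_Int_invariant:
  assumes "x \<in> X" "k < c" "free x k" "S \<subseteq> {..<2 ^ r}"
    and "\<And>T t. T \<in> A \<Longrightarrow> t < 2 ^ r \<Longrightarrow> T((k, x ! k) := t) \<in> F \<longleftrightarrow> T \<in> F"
  shows "Pr (hits S x \<inter> F) = card S / 2 ^ r * Pr F"
  using assms X_keys free_upd
  by (intro prob_tab_hash_in_Int_free_entry[OF A_tables finite_A A_nonempty]) auto

lemma prob_hits:
  assumes "x \<in> X" "S \<subseteq> {..<2 ^ r}"
  shows "Pr (hits S x) = card S / 2 ^ r"
proof -
  obtain k where "k < c" "free x k"
    using ex_free assms(1) by blast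
  then have "Pr (hits S x \<inter> UNIV) = card S / 2 ^ r * Pr UNIV"
    using assms by (intro prob_hits_Int_invariant) auto
  then show ?thesis
    by simp
qed

lemma prob_hits_pair:
  assumes "x \<in> X" "y \<in> X" "x \<noteq> y" "S \<subseteq> {..<2 ^ r}"
  shows "Pr (hits S x \<inter> hits S y) = (card S / 2 ^ r)\<^sup>2"
proof -
  have oriented: "Pr (hits S x \<inter> hits S y) = (card S / 2 ^ r)\<^sup>2"
    if "x \<in> X" "y \<in> X" "k < c" "x ! k \<noteq> y ! k" "free x k" for x y k
  proof -
    have "Pr (hits S x \<inter> hits S y) = card S / 2 ^ r * Pr (hits S y)"
      using that assms(4) by (intro prob_hits_Int_invariant) (auto simp: tab_hash_fun_upd_other)
    then show ?thesis
      using prob_hits[OF that(2) assms(4)] by (simp add: power2_eq_square)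
  qed
  obtain k where "k < c" "x ! k \<noteq> y ! k" "free x k \<or> free y k"
    using free_separates assms(1-3) by blast
  then show ?thesis
    using oriented[of x y k] oriented[of y x k] assms(1,2) by (auto simp: Int_commute)
qed

lemma prob_hits_given_union:
  assumes x: "x \<in> X" and Y: "Y \<subseteq> X - {x}" and k: "k < c" "free x k"
    and S: "S \<subseteq> {..<2 ^ r}"
  shows "\<bar>Pr (hits S x \<inter> (\<Union>y\<in>Y. hits S y)) - card S / 2 ^ r * Pr (\<Union>y\<in>Y. hits S y)\<bar>
    \<le> card (agreeing X k x) * (card S / 2 ^ r)\<^sup>2"
proof -
  define J where "J = {y \<in> Y. y ! k = x ! k}"
  txt \<open>The keys of Y - J never read the entry (k, x ! k), so the event F is invariant under
    reassigning it and hence independent of h(x) \<in> S.\<close>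
  define F where "F = (\<Union>y \<in> Y - J. hits S y)"
  have union: "(\<Union>y\<in>Y. hits S y) = F \<union> (\<Union>y\<in>J. hits S y)"
    unfolding F_def J_def by blast
  have "J \<subseteq> X"
    using Y unfolding J_def by auto
  then have "finite J"
    using finite_X by (rule finite_subset)
  have indep_F: "Pr (hits S x \<inter> F) = card S / 2 ^ r * Pr F"
    using x k S unfolding F_def J_def
    by (intro prob_hits_Int_invariant) (auto simp: tab_hash_fun_upd_other)
  have "\<bar>Pr (hits S x \<inter> (\<Union>y\<in>Y. hits S y)) - card S / 2 ^ r * Pr (\<Union>y\<in>Y. hits S y)\<bar>
      \<le> card J * (card S / 2 ^ r)\<^sup>2"
    unfolding union
  proof (rule measure_pmf.prob_Int_union_deviation)
    show "Pr (hits S j) = card S / 2 ^ r" if "j \<in> J" for j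
      using that Y S unfolding J_def by (intro prob_hits) auto
    show "Pr (hits S x \<inter> hits S j) = (card S / 2 ^ r)\<^sup>2" if "j \<in> J" for j
      using that x Y S unfolding J_def by (intro prob_hits_pair) auto
  qed (simp_all add: \<open>finite J\<close> indep_F)
  also have "card J \<le> card (agreeing X k x)"
    using finite_X Y unfolding J_def agreeing_def by (intro card_mono) auto
  finally show ?thesis
    by (simp add: mult_right_mono)
qed

lemma prob_hits_deviation:
  assumes S: "S \<subseteq> {..<2 ^ r}"
  shows "\<bar>Pr {T. tab_hash c T ` X \<inter> S \<noteq> {}} - (1 - (1 - card S / 2 ^ r) ^ card X)\<bar>
    \<le> (card S / 2 ^ r)\<^sup>2 * (\<Sum>x\<in>X. Min ((\<lambda>k. real (card (agreeing X k x))) ` {k. k < c \<and> free x k}))"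
proof -
  define \<rho> where "\<rho> = card S / 2 ^ r"
  have "card S \<le> 2 ^ r"
    using card_mono[OF _ S] by simp
  then have "0 \<le> \<rho>" "\<rho> \<le> 1"
    unfolding \<rho>_def by auto
  have step: "\<bar>Pr (hits S x \<inter> (\<Union>y\<in>Y. hits S y)) - \<rho> * Pr (\<Union>y\<in>Y. hits S y)\<bar>
      \<le> \<rho>\<^sup>2 * Min ((\<lambda>k. real (card (agreeing X k x))) ` {k. k < c \<and> free x k})"
    if "x \<in> X" "Y \<subseteq> X - {x}" for x Y
  proof -
    let ?K = "{k. k < c \<and> free x k}"
    have "Min ((\<lambda>k. real (card (agreeing X k x))) ` ?K) \<in> (\<lambda>k. real (card (agreeing X k x))) ` ?K"
      using ex_free \<open>x \<in> X\<close> by (intro Min_in) auto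
    then obtain k where k: "k \<in> ?K"
      and min: "Min ((\<lambda>k. real (card (agreeing X k x))) ` ?K) = card (agreeing X k x)"
      by auto
    show ?thesis
      using prob_hits_given_union[OF that _ _ S, of k] k unfolding min \<rho>_def
      by (simp add: mult.commute)
  qed
  have "\<bar>Pr (\<Union>x\<in>X. hits S x) - (1 - (1 - \<rho>) ^ card X)\<bar>
      \<le> (\<Sum>x\<in>X. \<rho>\<^sup>2 * Min ((\<lambda>k. real (card (agreeing X k x))) ` {k. k < c \<and> free x k}))"
    using finite_X \<open>0 \<le> \<rho>\<close> \<open>\<rho> \<le> 1\<close>
  proof (rule measure_pmf.prob_UN_deviation)
    show "Pr (hits S x) = \<rho>" if "x \<in> X" for x
      using prob_hits[OF that S] unfolding \<rho>_def .
  qed (use step in auto)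
  moreover have "{T. tab_hash c T ` X \<inter> S \<noteq> {}} = (\<Union>x\<in>X. hits S x)"
    by auto
  ultimately show ?thesis
    unfolding \<rho>_def by (simp add: sum_distrib_left)
qed

end

section \<open>Summing the minimal numbers of agreeing keys\<close>

lemma convex_on_power_nonneg: "convex_on {0::real..} (\<lambda>x. x ^ n)"
  by (cases "even n") (auto intro: convex_on_subset[OF convex_power_even] convex_power_odd)

lemma sum_power_le_card_power_mult_sum:
  fixes s :: "'a \<Rightarrow> real"
  assumes "finite I" "\<And>i. i \<in> I \<Longrightarrow> 0 \<le> s i" "n \<ge> 1"
  shows "(\<Sum>i\<in>I. s i) ^ n \<le> real (card I) ^ (n - 1) * (\<Sum>i\<in>I. s i ^ n)"
proof (cases "I = {}")
  case True
  then show ?thesis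
    using \<open>n \<ge> 1\<close> by (simp add: power_0_left)
next
  case False
  define m where "m = real (card I)"
  have "m > 0"
    using False \<open>finite I\<close> unfolding m_def by (simp add: card_gt_0_iff)
  have "((\<Sum>i\<in>I. s i) / m) ^ n = (\<Sum>i\<in>I. (1 / m) *\<^sub>R s i) ^ n"
    by (simp add: sum_divide_distrib)
  also have "\<dots> \<le> (\<Sum>i\<in>I. (1 / m) * s i ^ n)"
    using assms \<open>m > 0\<close>
    by (intro convex_on_sum[OF _ _ convex_on_power_nonneg]) (auto simp: m_def)
  finally have "(\<Sum>i\<in>I. s i) ^ n / m ^ n \<le> (\<Sum>i\<in>I. s i ^ n) / m"
    by (simp add: power_divide flip: sum_divide_distrib)
  then have "(\<Sum>i\<in>I. s i) ^ n \<le> (\<Sum>i\<in>I. s i ^ n) / m * m ^ n"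
    using \<open>m > 0\<close> by (simp add: pos_divide_le_eq)
  also have "m ^ n = m * m ^ (n - 1)"
    using \<open>n \<ge> 1\<close> by (cases n) auto
  finally show ?thesis
    using \<open>m > 0\<close> unfolding m_def by (simp add: mult.commute)
qed

lemma sum_le_from_sum_prod_bound:
  fixes s :: "'a \<Rightarrow> real" and M :: "'a \<Rightarrow> nat \<Rightarrow> real" and a :: real
  assumes "finite X" "c \<ge> 1" "0 \<le> a"
    and s_nonneg: "\<And>x. x \<in> X \<Longrightarrow> 0 \<le> s x"
    and s_le: "\<And>x k. x \<in> X \<Longrightarrow> k < c \<Longrightarrow> s x \<le> M x k"
    and prod_bound: "(\<Sum>x\<in>X. \<Prod>k<c. M x k) \<le> (a * card X) ^ c"
  shows "(\<Sum>x\<in>X. s x) \<le> a * card X powr (2 - 1 / c)"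
proof (cases "X = {}")
  case False
  define m where "m = real (card X)"
  have "m > 0"
    using False \<open>finite X\<close> unfolding m_def by (simp add: card_gt_0_iff)
  have "(\<Sum>x\<in>X. s x) ^ c \<le> m ^ (c - 1) * (\<Sum>x\<in>X. s x ^ c)"
    unfolding m_def using assms by (intro sum_power_le_card_power_mult_sum) auto
  also have "(\<Sum>x\<in>X. s x ^ c) \<le> (\<Sum>x\<in>X. \<Prod>k<c. M x k)"
  proof (rule sum_mono)
    fix x assume "x \<in> X"
    have "s x ^ c = (\<Prod>k<c. s x)"
      by simp
    also have "\<dots> \<le> (\<Prod>k<c. M x k)"
      using s_nonneg s_le \<open>x \<in> X\<close> by (intro prod_mono) auto
    finally show "s x ^ c \<le> (\<Prod>k<c. M x k)" .
  qed
  also have "\<dots> \<le> a ^ c * m ^ c"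
    using prod_bound unfolding m_def by (simp add: power_mult_distrib)
  also have "m ^ (c - 1) * (a ^ c * m ^ c) = (a * m powr (2 - 1 / c)) ^ c"
  proof -
    have "real c * (2 - 1 / real c) = real (c - 1) + real c"
      using \<open>c \<ge> 1\<close> by (simp add: field_simps of_nat_diff)
    then show ?thesis
      using \<open>m > 0\<close> by (simp add: power_mult_distrib powr_power powr_add powr_realpow)
  qed
  finally have "(\<Sum>x\<in>X. s x) ^ c \<le> (a * m powr (2 - 1 / c)) ^ c"
    using \<open>m > 0\<close> by (simp add: mult_left_mono)
  then show ?thesis
    using \<open>c \<ge> 1\<close> \<open>0 \<le> a\<close> s_nonneg unfolding m_def
    by (simp add: power_mono_iff sum_nonneg)
qed simp

lemma agreeing_tuple_determines_key:
  assumes "x \<in> X" "x' \<in> X" "X \<subseteq> keys c \<sigma>"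
    and fixed_eq: "\<And>k. k < c \<Longrightarrow> fixed x k \<Longrightarrow> fixed x' k \<Longrightarrow> x ! k = x' ! k"
    and same_pattern: "{k. k < c \<and> fixed x k} = {k. k < c \<and> fixed x' k}"
    and ys: "ys \<in> PiE {..<c} (\<lambda>k. if fixed x k then X else agreeing X k x)"
      "ys \<in> PiE {..<c} (\<lambda>k. if fixed x' k then X else agreeing X k x')"
  shows "x = x'"
proof (rule nth_equalityI)
  show "length x = length x'"
    using assms(1-3) unfolding keys_def by auto
  fix k assume "k < length x"
  then have "k < c"
    using assms(1,3) unfolding keys_def by auto
  moreover have "k \<in> {k. k < c \<and> fixed x k} \<longleftrightarrow> k \<in> {k. k < c \<and> fixed x' k}"
    using same_pattern by simp
  ultimately have fixed_iff: "fixed x k \<longleftrightarrow> fixed x' k"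
    by simp
  have "ys k \<in> (if fixed x k then X else agreeing X k x)"
    using PiE_mem[OF ys(1)] \<open>k < c\<close> by blast
  moreover have "ys k \<in> (if fixed x' k then X else agreeing X k x')"
    using PiE_mem[OF ys(2)] \<open>k < c\<close> by blast
  ultimately show "x ! k = x' ! k"
    using fixed_eq[OF \<open>k < c\<close>] fixed_iff unfolding agreeing_def by (cases "fixed x k") auto
qed

lemma sum_prod_card_agreeing_le:
  fixes X :: "nat list set" and fixed :: "nat list \<Rightarrow> nat \<Rightarrow> bool"
  assumes "finite X" "X \<subseteq> keys c \<sigma>"
    and fixed_eq: "\<And>x y k. x \<in> X \<Longrightarrow> y \<in> X \<Longrightarrow> k < c \<Longrightarrow> fixed x k \<Longrightarrow> fixed y k \<Longrightarrow>
      x ! k = y ! k"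
  shows "(\<Sum>x\<in>X. \<Prod>k<c. card (if fixed x k then X else agreeing X k x))
    \<le> card X ^ c * card ((\<lambda>x. {k. k < c \<and> fixed x k}) ` X)"
proof -
  define B where "B x k = (if fixed x k then X else agreeing X k x)" for x k
  define pattern where "pattern x = {k. k < c \<and> fixed x k}" for x
  let ?tuples = "Sigma X (\<lambda>x. PiE {..<c} (B x))"
  have B_sub: "B x k \<subseteq> X" for x k
    unfolding B_def agreeing_def by auto
  then have "finite (PiE {..<c} (B x))" for x
    using \<open>finite X\<close> by (intro finite_PiE) (auto intro: finite_subset)
  then have "card ?tuples = (\<Sum>x\<in>X. card (PiE {..<c} (B x)))"
    using \<open>finite X\<close> by (intro card_SigmaI) auto
  then have "(\<Sum>x\<in>X. \<Prod>k<c. card (B x k)) = card ?tuples"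
    by (simp add: card_PiE)
  also have "\<dots> \<le> card (PiE {..<c} (\<lambda>_. X) \<times> pattern ` X)"
  proof (rule card_inj_on_le)
    show "inj_on (\<lambda>(x, ys). (ys, pattern x)) ?tuples"
    proof (rule inj_onI)
      fix p p' assume "p \<in> ?tuples" "p' \<in> ?tuples"
        and "(\<lambda>(x, ys). (ys, pattern x)) p = (\<lambda>(x, ys). (ys, pattern x)) p'"
      moreover obtain x ys x' ys' where "p = (x, ys)" "p' = (x', ys')"
        by (cases p, cases p')
      ultimately have x: "x \<in> X" "x' \<in> X" and "ys' = ys"
        and same: "pattern x = pattern x'"
        and ys: "ys \<in> PiE {..<c} (B x)" "ys \<in> PiE {..<c} (B x')"
        by auto
      have "x = x'"
        using agreeing_tuple_determines_key[OF x assms(2) fixed_eq[OF x]] same ys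
        unfolding B_def pattern_def by blast
      then show "p = p'"
        using \<open>p = (x, ys)\<close> \<open>p' = (x', ys')\<close> \<open>ys' = ys\<close> by simp
    qed
    have "PiE {..<c} (B x) \<subseteq> PiE {..<c} (\<lambda>_. X)" for x
      using B_sub by (rule PiE_mono)
    then show "(\<lambda>(x, ys). (ys, pattern x)) ` ?tuples \<subseteq> PiE {..<c} (\<lambda>_. X) \<times> pattern ` X"
      by auto
    show "finite (PiE {..<c} (\<lambda>_. X) \<times> pattern ` X)"
      using \<open>finite X\<close> by (simp add: finite_PiE)
  qed
  also have "\<dots> = card X ^ c * card (pattern ` X)"
    by (simp add: card_cartesian_product card_PiE)
  finally show ?thesis
    unfolding B_def pattern_def .
qed

lemma sum_Min_agreeing_le:
  assumes "c \<ge> 1" "X \<subseteq> keys c \<sigma>"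
  shows "(\<Sum>x\<in>X. Min ((\<lambda>k. real (card (agreeing X k x))) ` {..<c})) \<le> card X powr (2 - 1 / c)"
proof -
  have "finite X"
    using assms(2) finite_keys by (rule finite_subset)
  have "(\<Sum>x\<in>X. \<Prod>k<c. card (if False then X else agreeing X k x))
      \<le> card X ^ c * card ((\<lambda>x. {k. k < c \<and> False}) ` X)"
    using \<open>finite X\<close> assms(2) by (rule sum_prod_card_agreeing_le) auto
  also have "\<dots> \<le> card X ^ c"
    using card_mono[of "{{}}" "(\<lambda>x. {k. k < c \<and> False}) ` X"] by auto
  finally have prod_bound: "(\<Sum>x\<in>X. \<Prod>k<c. real (card (agreeing X k x))) \<le> (1 * real (card X)) ^ c"
    by (simp flip: of_nat_sum of_nat_prod of_nat_power)
  have "(\<Sum>x\<in>X. Min ((\<lambda>k. real (card (agreeing X k x))) ` {..<c})) \<le> 1 * card X powr (2 - 1 / c)"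
  proof (rule sum_le_from_sum_prod_bound[where M = "\<lambda>x k. real (card (agreeing X k x))",
        OF \<open>finite X\<close> assms(1) _ _ _ prod_bound])
    show "0 \<le> Min ((\<lambda>k. real (card (agreeing X k x))) ` {..<c})" for x
      using assms(1) by (simp add: Min_ge_iff lessThan_empty_iff)
    show "Min ((\<lambda>k. real (card (agreeing X k x))) ` {..<c}) \<le> real (card (agreeing X k x))"
      if "k < c" for x k
      using that by (simp add: Min_le_iff)
  qed simp
  then show ?thesis
    by simp
qed

lemma sum_prod_card_agreeing_avoiding_le:
  assumes "finite X" "X \<subseteq> keys c \<sigma>"
  shows "(\<Sum>x\<in>X. \<Prod>k<c. real (card (if x ! k = q ! k then X else agreeing X k x)))
    \<le> (2 * real (card X)) ^ c"
proof -
  have "(\<Sum>x\<in>X. \<Prod>k<c. card (if x ! k = q ! k then X else agreeing X k x))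
      \<le> card X ^ c * card ((\<lambda>x. {k. k < c \<and> x ! k = q ! k}) ` X)"
    using assms by (rule sum_prod_card_agreeing_le) auto
  also have "\<dots> \<le> card X ^ c * 2 ^ c"
  proof -
    have "card ((\<lambda>x. {k. k < c \<and> x ! k = q ! k}) ` X) \<le> card (Pow {..<c})"
      by (intro card_mono) auto
    then show ?thesis
      by (simp add: card_Pow)
  qed
  finally have "real (\<Sum>x\<in>X. \<Prod>k<c. card (if x ! k = q ! k then X else agreeing X k x))
      \<le> real (card X ^ c * 2 ^ c)"
    by (simp only: of_nat_le_iff)
  then show ?thesis
    by (simp add: power_mult_distrib mult.commute)
qed

lemma sum_Min_agreeing_avoiding_le:
  assumes "c \<ge> 1" "X \<subseteq> keys c \<sigma>" "q \<in> keys c \<sigma>" "q \<notin> X"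
  shows "(\<Sum>x\<in>X. Min ((\<lambda>k. real (card (agreeing X k x))) ` {k. k < c \<and> x ! k \<noteq> q ! k}))
    \<le> 2 * card X powr (2 - 1 / c)"
proof -
  let ?K = "\<lambda>x. {k. k < c \<and> x ! k \<noteq> q ! k}"
  let ?m = "\<lambda>x. Min ((\<lambda>k. real (card (agreeing X k x))) ` ?K x)"
  have "finite X"
    using assms(2) finite_keys by (rule finite_subset)
  have m_le: "?m x \<le> card (agreeing X k x)" if "k \<in> ?K x" for x k
    using that by (intro Min_le) auto
  have K: "?K x \<noteq> {}" if "x \<in> X" for x
  proof -
    have x: "x \<in> keys c \<sigma>" "x \<noteq> q"
      using that assms(2,4) by auto
    obtain k where "k < c" "x ! k \<noteq> q ! k"
      by (rule keys_neq_imp_nth_neq[OF x(1) assms(3) x(2)])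
    then show ?thesis
      by auto
  qed
  have m_le_M: "?m x \<le> real (card (if x ! k = q ! k then X else agreeing X k x))"
    if "x \<in> X" "k < c" for x k
  proof -
    obtain k' where "k' \<in> ?K x"
      using K[OF \<open>x \<in> X\<close>] by blast
    then have "?m x \<le> card (agreeing X k' x)"
      by (rule m_le)
    also have "card (agreeing X k' x) \<le> card X"
      using \<open>finite X\<close> unfolding agreeing_def by (intro card_mono) auto
    finally show ?thesis
      using m_le[of k x] \<open>k < c\<close> by auto
  qed
  have m_nonneg: "0 \<le> ?m x" if "x \<in> X" for x
    using K[OF that] by (simp add: Min_ge_iff)
  show ?thesis
  proof (rule sum_le_from_sum_prod_bound[OF \<open>finite X\<close> assms(1)])
    show "(\<Sum>x\<in>X. \<Prod>k<c. real (card (if x ! k = q ! k then X else agreeing X k x)))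
        \<le> (2 * real (card X)) ^ c"
      using \<open>finite X\<close> assms(2) by (rule sum_prod_card_agreeing_avoiding_le)
  qed (use m_nonneg m_le_M in auto)
qed

section \<open>Tabulation hashing, unconditioned and given the hash of a query\<close>

lemma cond_pmf_of_set:
  assumes "finite B" "B \<inter> C \<noteq> {}"
  shows "cond_pmf (pmf_of_set B) C = pmf_of_set (B \<inter> C)"
proof (rule pmf_eqI)
  fix T
  have "B \<noteq> {}"
    using assms by auto
  then have "set_pmf (pmf_of_set B) \<inter> C \<noteq> {}"
    using assms by simp
  with \<open>B \<noteq> {}\<close> show "pmf (cond_pmf (pmf_of_set B) C) T = pmf (pmf_of_set (B \<inter> C)) T"
    using assms by (simp add: pmf_cond measure_pmf_of_set indicator_def card_gt_0_iff)
qed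

lemma free_entries_tables:
  assumes "X \<subseteq> keys c \<sigma>" "c \<ge> 1"
  shows "free_entries c \<sigma> r (tables c \<sigma> r) X (\<lambda>_ _. True)"
proof
  show "T((k, x ! k) := t) \<in> tables c \<sigma> r"
    if "x \<in> X" "k < c" "T \<in> tables c \<sigma> r" "t < 2 ^ r" for x k T t
    using that assms(1) by (intro fun_upd_in_tables nth_key_less) auto
  show "\<exists>k<c. True"
    using \<open>c \<ge> 1\<close> by (auto intro!: exI[of _ 0])
  show "\<exists>k<c. x ! k \<noteq> y ! k \<and> (True \<or> True)" if "x \<in> X" "y \<in> X" "x \<noteq> y" for x y
    using keys_neq_imp_nth_neq[of x c \<sigma> y] that assms(1) by blast
qed (use assms(1) finite_tables tables_nonempty in auto)

lemma free_entries_tables_hash_fixed: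
  assumes "X \<subseteq> keys c \<sigma>" "c \<ge> 1" "q \<in> keys c \<sigma>" "q \<notin> X" "z < 2 ^ r"
  shows "free_entries c \<sigma> r (tables c \<sigma> r \<inter> {T. tab_hash c T q = z}) X (\<lambda>x k. x ! k \<noteq> q ! k)"
proof
  interpret all: free_entries c \<sigma> r "tables c \<sigma> r" "{q}" "\<lambda>_ _. True"
    using assms by (intro free_entries_tables) auto
  have "all.Pr (all.hits {z} q) = 1 / 2 ^ r"
    using all.prob_hits[of q "{z}"] assms(5) by simp
  then have "all.Pr {T. tab_hash c T q = z} \<noteq> 0"
    by simp
  then show "tables c \<sigma> r \<inter> {T. tab_hash c T q = z} \<noteq> {}"
    by (auto simp: measure_pmf_of_set finite_tables tables_nonempty)
  show "\<exists>k<c. x ! k \<noteq> q ! k" if "x \<in> X" for x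
    using keys_neq_imp_nth_neq[of x c \<sigma> q] that assms by blast
  show "\<exists>k<c. x ! k \<noteq> y ! k \<and> (x ! k \<noteq> q ! k \<or> y ! k \<noteq> q ! k)"
    if xy: "x \<in> X" "y \<in> X" "x \<noteq> y" for x y
  proof -
    obtain k where "k < c" "x ! k \<noteq> y ! k"
      using keys_neq_imp_nth_neq[of x c \<sigma> y] xy assms(1) by blast
    then show ?thesis
      by auto
  qed
  show "T((k, x ! k) := t) \<in> tables c \<sigma> r \<inter> {T. tab_hash c T q = z}"
    if "x \<in> X" "k < c" "x ! k \<noteq> q ! k" "T \<in> tables c \<sigma> r \<inter> {T. tab_hash c T q = z}" "t < 2 ^ r"
    for x k T t
    using that assms(1) by (auto intro!: fun_upd_in_tables nth_key_less simp: tab_hash_fun_upd_other)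
qed (use assms(1) finite_tables in auto)

lemma prob_tab_hash_hits_deviation:
  assumes "c \<ge> 1" "X \<subseteq> keys c \<sigma>" "S \<subseteq> {..<2 ^ r}"
  shows "\<bar>measure_pmf.prob (tab_dist c \<sigma> r) {T. tab_hash c T ` X \<inter> S \<noteq> {}}
      - (1 - (1 - card S / 2 ^ r) ^ card X)\<bar>
    \<le> card X powr (2 - 1 / c) * (card S / 2 ^ r)\<^sup>2"
proof -
  interpret free_entries c \<sigma> r "tables c \<sigma> r" X "\<lambda>_ _. True"
    using assms by (intro free_entries_tables)
  have "\<bar>measure_pmf.prob (tab_dist c \<sigma> r) {T. tab_hash c T ` X \<inter> S \<noteq> {}}
      - (1 - (1 - card S / 2 ^ r) ^ card X)\<bar>
    \<le> (card S / 2 ^ r)\<^sup>2 * (\<Sum>x\<in>X. Min ((\<lambda>k. real (card (agreeing X k x))) ` {..<c}))"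
    using prob_hits_deviation[OF assms(3)] unfolding tab_dist_def lessThan_def by simp
  also have "\<dots> \<le> (card S / 2 ^ r)\<^sup>2 * card X powr (2 - 1 / c)"
    using sum_Min_agreeing_le[OF assms(1,2)] by (rule mult_left_mono) simp
  finally show ?thesis
    by (simp add: mult.commute)
qed

lemma cond_prob_tab_hash_hits_deviation:
  assumes "c \<ge> 1" "X \<subseteq> keys c \<sigma>" "q \<in> keys c \<sigma>" "q \<notin> X" "z < 2 ^ r" "S \<subseteq> {..<2 ^ r}"
  shows "\<bar>measure_pmf.prob (cond_pmf (tab_dist c \<sigma> r) {T. tab_hash c T q = z})
        {T. tab_hash c T ` X \<inter> S \<noteq> {}} - (1 - (1 - card S / 2 ^ r) ^ card X)\<bar>
    \<le> 2 * card X powr (2 - 1 / c) * (card S / 2 ^ r)\<^sup>2"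
proof -
  interpret free_entries c \<sigma> r "tables c \<sigma> r \<inter> {T. tab_hash c T q = z}" X "\<lambda>x k. x ! k \<noteq> q ! k"
    using assms by (intro free_entries_tables_hash_fixed)
  have "cond_pmf (tab_dist c \<sigma> r) {T. tab_hash c T q = z}
      = pmf_of_set (tables c \<sigma> r \<inter> {T. tab_hash c T q = z})"
    unfolding tab_dist_def using finite_tables A_nonempty by (rule cond_pmf_of_set)
  then have "\<bar>measure_pmf.prob (cond_pmf (tab_dist c \<sigma> r) {T. tab_hash c T q = z})
        {T. tab_hash c T ` X \<inter> S \<noteq> {}} - (1 - (1 - card S / 2 ^ r) ^ card X)\<bar>
    \<le> (card S / 2 ^ r)\<^sup>2 *
      (\<Sum>x\<in>X. Min ((\<lambda>k. real (card (agreeing X k x))) ` {k. k < c \<and> x ! k \<noteq> q ! k}))"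
    using prob_hits_deviation[OF assms(6)] by simp
  also have "\<dots> \<le> (card S / 2 ^ r)\<^sup>2 * (2 * card X powr (2 - 1 / c))"
    using sum_Min_agreeing_avoiding_le[OF assms(1-4)] by (rule mult_left_mono) simp
  finally show ?thesis
    by (simp add: mult.commute mult.left_commute)
qed

theorem theorem5:
  fixes c \<sigma> r :: nat and X :: "nat list set" and S :: "nat set"
  assumes c_pos: "c \<ge> 1" and sigma_pos: "\<sigma> \<ge> 1"
    and X_keys: "X \<subseteq> keys c \<sigma>"
    and S_sub: "S \<subseteq> {..<2^r}"
  shows
   "\<bar>measure_pmf.prob (tab_dist c \<sigma> r) {T. tab_hash c T ` X \<inter> S \<noteq> {}}
       - (1 - (1 - real (card S) / 2^r) ^ card X)\<bar>
      \<le> real (card X) powr (2 - 1 / real c) * (real (card S) / 2^r)^2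
    \<and> (\<forall>q (Sf :: nat \<Rightarrow> nat set). q \<in> keys c \<sigma> \<longrightarrow> q \<notin> X \<longrightarrow>
         (\<forall>z<2^r. Sf z \<subseteq> {..<2^r}) \<longrightarrow>
         (\<forall>z<2^r.
            \<bar>measure_pmf.prob (cond_pmf (tab_dist c \<sigma> r) {T. tab_hash c T q = z})
                 {T. tab_hash c T ` X \<inter> Sf z \<noteq> {}}
              - (1 - (1 - real (card (Sf z)) / 2^r) ^ card X)\<bar>
            \<le> 2 * real (card X) powr (2 - 1 / real c) * (real (card (Sf z)) / 2^r)^2))"
  by (intro conjI allI impI prob_tab_hash_hits_deviation[OF c_pos X_keys S_sub]
      cond_prob_tab_hash_hits_deviation[OF c_pos X_keys]) auto

end
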